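(* Consider Algorithm B on an input whose optimal offline makespan is $1$, and suppose job $j$ is handled by Step 5 with $p_j+p^{\max Y}_j\le 1.25$. Let $\gamma_j=y_{j-1}+p_j-1.25$. Then the set $W$ chosen in Step 5 satisfies $\gamma_j\le w_j\le 0.75\,p_j$ and $w_j<0.5$; after $j$ is handled both machine loads are at most $1.25$; and if afterwards $m_1$ receives only jobs of GoS $1$, its load remains at most $1.25$.
   Context: Model (two hierarchical machines with migration). Jobs $1,2,\dots,n$ arrive one by one. Job $j$ has a size $p_j>0$ and a grade of service (GoS) $g_j\in\{1,2\}$; a job of GoS $1$ may only be processed on machine $m_1$, a job of GoS $2$ on $m_1$ or $m_2$. When job $j$ arrives, the algorithm assigns it and may migrate previously arrived jobs of total size at most $M\cdot p_j$. Bin stretching: the optimal offline makespan of the complete input is $1$ and is known in advance. Notation: $Y_{j}$ is the set of jobs on $m_2$ just after job $j$ has been handled (including migrations), $y_j$ its total size, $y_0=0$. $p^{\max Y}_j$ and $p^{\max Y,2}_j$ are the largest and second largest sizes of jobs in $Y_{j-1}$ (each defined as $0$ if it does not exist), and $j^{\max Y}$ is a job of $Y_{j-1}$ of size $p^{\max Y}_j$. "Sorted $Y_{j-1}$" means the jobs of $Y_{j-1}$ listed in non-increasing order of size; $w_j$ denotes the total size of the set $W$ chosen when handling $j$. Algorithm B. On arrival of job $j$: Step 2: if $g_j=1$ or $y_{j-1}\ge 0.75$, assign $j$ to $m_1$. Step 3: else if $y_{j-1}+p_j\le 1.25$, assign $j$ to $m_2$. Step 4: else if $p_j\ge 0.75$: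 let $W$ be the longest prefix of sorted $Y_{j-1}$ with total size at most $0.75p_j$ (possibly empty). If $y_{j-1}-w_j+p_j>1.25$, assign $j$ to $m_1$ (no migration); otherwise migrate the jobs of $W$ to $m_1$ and assign $j$ to $m_2$. Step 5: else (so $p_j<0.75$): if $p_j+p^{\max Y}_j>1.25$, assign $j$ to $m_1$. Otherwise choose $W$ as follows: if $p^{\max Y}_j\ge y_{j-1}/2$, let $W=Y_{j-1}\setminus\{j^{\max Y}\}$; if $0.25\le p^{\max Y}_j<y_{j-1}/2$, let $W=\{j^{\max Y}\}$; if $p^{\max Y}_j<0.25$, let $W$ be the shortest prefix of sorted $Y_{j-1}$ with total size at least $0.25$ (or all of $Y_{j-1}$ if none exists), and if then $w_j>0.75p_j$ replace $W$ by $Y_{j-1}\setminus W$. Migrate the jobs of $W$ to $m_1$ and assign $j$ to $m_2$. *)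

theory Defs
  imports Main "HOL.Real"
begin

text \<open>Jobs are numbered 1..n.  p i is the size, g i the grade of service (1 or 2).
  A state of the algorithm is the set Y of jobs currently on machine m2; the jobs on m1
  after job j has been handled are the remaining arrived jobs {1..j} - Y.\<close>

definition load :: "(nat \<Rightarrow> real) \<Rightarrow> nat set \<Rightarrow> real" where
  "load p S = (\<Sum>i\<in>S. p i)"

text \<open>Optimal offline makespan of jobs 1..n: S is the set of jobs put on m2
  (only GoS 2 jobs allowed there).\<close>
definition opt_makespan :: "(nat \<Rightarrow> real) \<Rightarrow> (nat \<Rightarrow> nat) \<Rightarrow> nat \<Rightarrow> real" where
  "opt_makespan p g n =
     Min {max (load p ({1..n} - S)) (load p S) | S. S \<subseteq> {1..n} \<and> (\<forall>i\<in>S. g i = 2)}"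

definition sorted_listing :: "(nat \<Rightarrow> real) \<Rightarrow> nat set \<Rightarrow> nat list \<Rightarrow> bool" where
  "sorted_listing p Y L \<longleftrightarrow> distinct L \<and> set L = Y \<and> sorted_wrt (\<lambda>a b. p b \<le> p a) L"

definition pmaxY :: "(nat \<Rightarrow> real) \<Rightarrow> nat set \<Rightarrow> real" where
  "pmaxY p Y = (if Y = {} then 0 else Max (p ` Y))"

definition step4_W :: "(nat \<Rightarrow> real) \<Rightarrow> nat list \<Rightarrow> real \<Rightarrow> nat set" where
  "step4_W p L pj =
     set (take (GREATEST k. k \<le> length L \<and> sum_list (map p (take k L)) \<le> 0.75 * pj) L)"

definition step5_prefix :: "(nat \<Rightarrow> real) \<Rightarrow> nat list \<Rightarrow> nat set" where
  "step5_prefix p L =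
     (if \<exists>k. sum_list (map p (take k L)) \<ge> 0.25
      then set (take (LEAST k. sum_list (map p (take k L)) \<ge> 0.25) L)
      else set L)"

definition step5_choice :: "(nat \<Rightarrow> real) \<Rightarrow> nat \<Rightarrow> nat set \<Rightarrow> nat set \<Rightarrow> bool" where
  "step5_choice p j Yp W \<longleftrightarrow>
     (let pm = pmaxY p Yp; y = load p Yp in
      \<exists>jm\<in>Yp. p jm = pm \<and>
        (if pm \<ge> y / 2 then W = Yp - {jm}
         else if pm \<ge> 0.25 then W = {jm}
         else (\<exists>L. sorted_listing p Yp L \<and>
                 (let W1 = step5_prefix p L in
                  W = (if load p W1 > 0.75 * p j then Yp - W1 else W1)))))"

text \<open>One step of Algorithm B: handling job j turns the m2-set Yp into Yn, migrating the set W
  from m2 to m1 (W = {} when there is no migration).\<close>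
definition B_step :: "(nat \<Rightarrow> real) \<Rightarrow> (nat \<Rightarrow> nat) \<Rightarrow> nat \<Rightarrow> nat set \<Rightarrow> nat set \<Rightarrow> nat set \<Rightarrow> bool" where
  "B_step p g j Yp W Yn \<longleftrightarrow>
     (let y = load p Yp in
      if g j = 1 \<or> y \<ge> 0.75 then W = {} \<and> Yn = Yp
      else if y + p j \<le> 1.25 then W = {} \<and> Yn = insert j Yp
      else if p j \<ge> 0.75 then
        (\<exists>L. sorted_listing p Yp L \<and>
           (let W0 = step4_W p L (p j) in
            if y - load p W0 + p j > 1.25 then W = {} \<and> Yn = Yp
            else W = W0 \<and> Yn = insert j (Yp - W0)))
      else if p j + pmaxY p Yp > 1.25 then W = {} \<and> Yn = Yp
      else step5_choice p j Yp W \<and> Yn = insert j (Yp - W))"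

text \<open>A run of Algorithm B on jobs 1..n: Y k is the set of jobs on m2 after job k
  has been handled, Wm k the set migrated when handling job k.\<close>
definition B_run :: "(nat \<Rightarrow> real) \<Rightarrow> (nat \<Rightarrow> nat) \<Rightarrow> nat \<Rightarrow> (nat \<Rightarrow> nat set) \<Rightarrow> (nat \<Rightarrow> nat set) \<Rightarrow> bool" where
  "B_run p g n Y Wm \<longleftrightarrow> Y 0 = {} \<and> (\<forall>k\<in>{1..n}. B_step p g k (Y (k - 1)) (Wm k) (Y k))"

end

theory Submission
  imports Defs
begin

text \<open>Each branch of Step 5 migrates either a set of size below 0.5 (the job j^maxY, or a
  shortest prefix of jobs smaller than 0.25 reaching 0.25) or the complement of such a set in
  Y_{j-1}. Together with p^maxY \<le> 1.25 - p_j and y_{j-1} < 0.75 < p_j + 0.25 this places w_j in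
  [\<gamma>_j, min 0.5 (0.75 p_j)], so m_2 ends with load y_{j-1} - w_j + p_j \<in> (0.75, 1.25]. Since
  the total size of all jobs is at most 2 (the optimum is 1), m_1 carries at most 1.25, and this
  persists while m_1 only receives GoS 1 jobs, because then no job ever leaves m_2.\<close>

lemma load_diff:
  assumes "finite A" "B \<subseteq> A"
  shows "load p (A - B) = load p A - load p B"
  using assms by (simp add: load_def sum_diff)

lemma load_mono:
  fixes p :: "nat \<Rightarrow> real"
  assumes "finite B" "A \<subseteq> B" "\<forall>i\<in>B. p i > 0"
  shows "load p A \<le> load p B"
  unfolding load_def using assms by (intro sum_mono2) auto

lemma load_set_take:
  assumes "distinct L"
  shows "sum_list (map p (take k L)) = load p (set (take k L))"
  using assms by (simp add: load_def sum_list_distinct_conv_sum_set)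

lemma load_le_2_if_opt_makespan_eq_1:
  fixes p :: "nat \<Rightarrow> real"
  assumes "opt_makespan p g n = 1"
  shows "load p {1..n} \<le> 2"
proof -
  define F where "F = (\<lambda>S. max (load p ({1..n} - S)) (load p S))"
  define C where "C = {S. S \<subseteq> {1..n} \<and> (\<forall>i\<in>S. g i = 2)}"
  have "finite C" unfolding C_def by (rule finite_subset[of _ "Pow {1..n}"]) auto
  moreover have "{} \<in> C" unfolding C_def by auto
  ultimately have "Min (F ` C) \<in> F ` C" by (intro Min_in) auto
  moreover have "Min (F ` C) = 1"
    using assms unfolding opt_makespan_def F_def C_def by (simp add: setcompr_eq_image)
  ultimately obtain S where S: "S \<in> C" "F S = 1" by force
  have "load p {1..n} = load p ({1..n} - S) + load p S"
    using S(1) unfolding load_def C_def by (intro sum.subset_diff) auto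
  then show ?thesis using S(2) unfolding F_def by linarith
qed

lemma step5_prefix_load_bounds:
  fixes p :: "nat \<Rightarrow> real"
  assumes L: "distinct L" and small: "\<forall>i\<in>set L. p i < 0.25"
    and total: "load p (set L) \<ge> 0.25"
  shows "step5_prefix p L \<subseteq> set L \<and> 0.25 \<le> load p (step5_prefix p L)
       \<and> load p (step5_prefix p L) < 0.5"
proof -
  let ?s = "\<lambda>k. sum_list (map p (take k L))"
  have ex: "\<exists>k. ?s k \<ge> 0.25"
    using total load_set_take[OF L, of p "length L"] by (intro exI[of _ "length L"]) simp
  define k where "k = (LEAST k. ?s k \<ge> 0.25)"
  have W1: "step5_prefix p L = set (take k L)"
    using ex by (simp add: step5_prefix_def k_def)
  have lower: "?s k \<ge> 0.25" unfolding k_def using ex by (rule LeastI_ex)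
  then obtain k' where k: "k = Suc k'" by (cases k) auto
  have "k' < k" using k by simp
  then have below: "\<not> ?s k' \<ge> 0.25" unfolding k_def by (rule not_less_Least)
  have "k' < length L"
    using below lower by (cases "k' < length L") (auto simp: k)
  then have "?s k = ?s k' + p (L ! k')" and "L ! k' \<in> set L"
    by (simp_all add: k take_Suc_conv_app_nth)
  \<comment> \<open>the shortest prefix reaching 0.25 overshoots by less than one job, which is < 0.25\<close>
  then have "?s k < 0.5" using below small by fastforce
  then show ?thesis
    using lower W1 load_set_take[OF L] set_take_subset by metis
qed

lemma step5_choice_load_bounds:
  fixes p :: "nat \<Rightarrow> real"
  assumes fin: "finite Yp"
    and y_lt: "load p Yp < 0.75" and y_gt: "load p Yp + p j > 1.25"
    and pj: "p j < 0.75" and pm: "p j + pmaxY p Yp \<le> 1.25"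
    and ch: "step5_choice p j Yp W"
  shows "W \<subseteq> Yp \<and> load p Yp + p j - 1.25 \<le> load p W \<and> load p W \<le> 0.75 * p j
       \<and> load p W < 0.5"
proof -
  define y where "y = load p Yp"
  define pmx where "pmx = pmaxY p Yp"
  have "Yp \<noteq> {}" using y_gt pj by (auto simp: load_def)
  then have le_pmx: "p i \<le> pmx" if "i \<in> Yp" for i
    using fin that by (simp add: pmx_def pmaxY_def)
  obtain jm where jm: "jm \<in> Yp" "p jm = pmx"
    and choice: "if pmx \<ge> y / 2 then W = Yp - {jm}
         else if pmx \<ge> 0.25 then W = {jm}
         else (\<exists>L. sorted_listing p Yp L \<and>
                 (let W1 = step5_prefix p L in
                  W = (if load p W1 > 0.75 * p j then Yp - W1 else W1)))"
    using ch unfolding step5_choice_def Let_def pmx_def y_def by blast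
  consider (large) "pmx \<ge> y / 2" | (medium) "pmx < y / 2" "pmx \<ge> 0.25"
    | (small) "pmx < y / 2" "pmx < 0.25"
    by linarith
  then show ?thesis
  proof cases
    case large
    then have "W = Yp - {jm}" using choice by simp
    moreover have "load p (Yp - {jm}) = y - pmx"
      using load_diff[OF fin, of "{jm}"] jm by (simp add: load_def y_def)
    ultimately show ?thesis using large y_lt y_gt pm unfolding y_def pmx_def by auto
  next
    case medium
    then have "W = {jm}" using choice by simp
    then show ?thesis using medium jm y_lt y_gt pj pm unfolding y_def pmx_def
      by (auto simp: load_def)
  next
    case small
    then obtain L where L: "sorted_listing p Yp L"
      and W: "W = (if load p (step5_prefix p L) > 0.75 * p j then Yp - step5_prefix p L
                   else step5_prefix p L)"
      using choice unfolding Let_def by auto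
    have "distinct L" "set L = Yp" using L by (auto simp: sorted_listing_def)
    then have W1: "step5_prefix p L \<subseteq> Yp" "0.25 \<le> load p (step5_prefix p L)"
        "load p (step5_prefix p L) < 0.5"
      using step5_prefix_load_bounds[of L p] small le_pmx y_gt pj
      by (force simp: y_def)+
    show ?thesis
    proof (cases "load p (step5_prefix p L) > 0.75 * p j")
      case True
      then show ?thesis using W W1 load_diff[OF fin W1(1)] y_lt y_gt pj by auto
    next
      case False
      then show ?thesis using W W1 y_lt y_gt pj by auto
    qed
  qed
qed

lemma B_step_Yn_subset:
  assumes "B_step p g k Yp W Yn"
  shows "Yn \<subseteq> insert k Yp" and "g k = 1 \<Longrightarrow> Yn = Yp"
  using assms unfolding B_step_def Let_def by (auto split: if_splits)

lemma B_step_step5: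
  assumes "B_step p g j Yp W Yn"
    and "g j = 2" "load p Yp < 0.75" "load p Yp + p j > 1.25"
    and "p j < 0.75" "p j + pmaxY p Yp \<le> 1.25"
  shows "step5_choice p j Yp W \<and> Yn = insert j (Yp - W)"
  using assms unfolding B_step_def Let_def by simp

lemma B_run_Y_subset:
  assumes run: "B_run p g n Y Wm" and gos: "\<forall>i\<in>{1..n}. g i = 1 \<or> g i = 2" and "k \<le> n"
  shows "Y k \<subseteq> {1..k} \<and> (\<forall>i\<in>Y k. g i = 2)"
  using \<open>k \<le> n\<close>
proof (induction k)
  case 0
  then show ?case using run by (simp add: B_run_def)
next
  case (Suc k)
  have "B_step p g (Suc k) (Y (Suc k - 1)) (Wm (Suc k)) (Y (Suc k))"
    using run Suc.prems unfolding B_run_def by (metis atLeastAtMost_iff le_add1 plus_1_eq_Suc)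
  then have "B_step p g (Suc k) (Y k) (Wm (Suc k)) (Y (Suc k))" by simp
  then have "Y (Suc k) \<subseteq> insert (Suc k) (Y k)" and "g (Suc k) = 1 \<Longrightarrow> Y (Suc k) = Y k"
    by (rule B_step_Yn_subset)+
  moreover have "g (Suc k) = 1 \<or> g (Suc k) = 2" using gos Suc.prems by simp
  ultimately show ?case using Suc by force
qed

lemma B_run_m1_load_le:
  fixes p :: "nat \<Rightarrow> real"
  assumes run: "B_run p g n Y Wm" and gos: "\<forall>i\<in>{1..n}. g i = 1 \<or> g i = 2"
    and pos: "\<forall>i\<in>{1..n}. p i > 0" and opt: "opt_makespan p g n = 1"
    and "Y k \<subseteq> Y k'" "k' \<le> n"
  shows "load p ({1..k'} - Y k') \<le> 2 - load p (Y k)"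
proof -
  have sub: "Y k' \<subseteq> {1..k'}" using B_run_Y_subset[OF run gos \<open>k' \<le> n\<close>] by simp
  have "load p {1..k'} = load p ({1..k'} - Y k') + load p (Y k')"
    unfolding load_def using sub by (intro sum.subset_diff) auto
  moreover have "load p {1..k'} \<le> load p {1..n}"
    using \<open>k' \<le> n\<close> pos by (intro load_mono) auto
  moreover have "load p (Y k) \<le> load p (Y k')"
    using assms(5,6) sub pos by (intro load_mono) (auto intro: finite_subset)
  ultimately show ?thesis using load_le_2_if_opt_makespan_eq_1[OF opt] by linarith
qed

text \<open>A job leaving m_2 at step k would be a GoS 2 job newly placed on m_1.\<close>
lemma B_run_Y_mono_if_m1_gets_gos1:
  assumes run: "B_run p g n Y Wm" and gos: "\<forall>i\<in>{1..n}. g i = 1 \<or> g i = 2"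
    and "j \<le> j'" "j' \<le> n"
    and only1: "\<forall>k\<in>{j<..j'}. ({1..k} - Y k) - ({1..k - 1} - Y (k - 1)) \<subseteq> {i. g i = 1}"
  shows "Y j \<subseteq> Y j'"
proof -
  have step: "Y (k - 1) \<subseteq> Y k" if k: "k \<in> {j<..j'}" for k
  proof
    fix x assume x: "x \<in> Y (k - 1)"
    have "k - 1 \<le> n" using k \<open>j' \<le> n\<close> by auto
    then have "x \<in> {1..k - 1}" "g x = 2" using B_run_Y_subset[OF run gos] x by blast+
    then show "x \<in> Y k" using only1 k x by fastforce
  qed
  have "Y j \<subseteq> Y (j + d)" if "j + d \<le> j'" for d
    using that
  proof (induction d)
    case (Suc d)
    then show ?case using step[of "j + Suc d"] by simp
  qed simp
  from this[of "j' - j"] show ?thesis using \<open>j \<le> j'\<close> by simp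
qed

theorem mainTheorem8:
  fixes p :: "nat \<Rightarrow> real" and g :: "nat \<Rightarrow> nat" and n j :: nat
    and Y Wm :: "nat \<Rightarrow> nat set"
  assumes pos: "\<forall>i\<in>{1..n}. p i > 0"
    and gos: "\<forall>i\<in>{1..n}. g i = 1 \<or> g i = 2"
    and opt: "opt_makespan p g n = 1"
    and run: "B_run p g n Y Wm"
    and j: "j \<in> {1..n}"
    and step5: "g j = 2" "load p (Y (j - 1)) < 0.75" "load p (Y (j - 1)) + p j > 1.25"
      "p j < 0.75" "p j + pmaxY p (Y (j - 1)) \<le> 1.25"
  shows "load p (Y (j - 1)) + p j - 1.25 \<le> load p (Wm j)
       \<and> load p (Wm j) \<le> 0.75 * p j
       \<and> load p (Wm j) < 0.5
       \<and> load p ({1..j} - Y j) \<le> 1.25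
       \<and> load p (Y j) \<le> 1.25
       \<and> (\<forall>j'. j \<le> j' \<and> j' \<le> n \<and>
              (\<forall>k\<in>{j<..j'}. ({1..k} - Y k) - ({1..k - 1} - Y (k - 1)) \<subseteq> {i. g i = 1})
              \<longrightarrow> load p ({1..j'} - Y j') \<le> 1.25)"
proof -
  let ?Yp = "Y (j - 1)"
  have "j - 1 \<le> n" using j by auto
  then have Yp: "?Yp \<subseteq> {1..j - 1}" using B_run_Y_subset[OF run gos] by blast
  then have fin: "finite ?Yp" and "j \<notin> ?Yp" using j by (auto intro: finite_subset)
  have "B_step p g j ?Yp (Wm j) (Y j)" using run j by (simp add: B_run_def)
  then have ch: "step5_choice p j ?Yp (Wm j)" and Yj: "Y j = insert j (?Yp - Wm j)"
    using B_step_step5 step5 by blast+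
  note W = step5_choice_load_bounds[OF fin step5(2-5) ch]
  have "load p (Y j) = p j + (load p ?Yp - load p (Wm j))"
    using Yj fin \<open>j \<notin> ?Yp\<close> W load_diff[OF fin] by (simp add: load_def)
  then have m2: "0.75 < load p (Y j)" "load p (Y j) \<le> 1.25" using W step5 by auto
  have "load p ({1..j'} - Y j') \<le> 1.25"
    if "Y j \<subseteq> Y j'" "j' \<le> n" for j'
    using B_run_m1_load_le[OF run gos pos opt that] m2 by simp
  then show ?thesis
    using W m2 j B_run_Y_mono_if_m1_gets_gos1[OF run gos] by auto
qed

end
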